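(* Let $a$ be a positive integer, let $G$ be a finite simple graph of arboricity at most $a$ containing no isolated edges, and let $p_1<p_2<\cdots<p_a$ be the first $a$ prime numbers larger than $3$. Then ${\chi^\Sigma_g}^\star(G)\leq p_1p_2\cdots p_a$.
   Context: The arboricity of $G$ is the least number of forests into which $E(G)$ can be decomposed; an isolated edge is a connected component isomorphic to $K_2$. For an Abelian group $\mathcal{G}$ with identity $0$ and $f\colon E(G)\to\mathcal{G}$, $w_f(v)=\sum_{u\in N(v)}f(uv)$. ${\chi^\Sigma_g}^\star(G)$ is the least positive integer $k$ such that for every Abelian group $\mathcal{G}$ of order $k$ there exists $f\colon E(G)\to\mathcal{G}\setminus\{0\}$ with $w_f(u)\neq w_f(v)$ for every edge $uv$. *)

theory Defs
  imports "HOL-Algebra.Algebra" "HOL-Computational_Algebra.Primes"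
begin

definition simple_graph :: "'v set \<Rightarrow> 'v set set \<Rightarrow> bool" where
  "simple_graph V E \<longleftrightarrow> finite V \<and>
     (\<forall>e\<in>E. \<exists>u v. e = {u, v} \<and> u \<noteq> v \<and> u \<in> V \<and> v \<in> V)"

definition has_cycle :: "'v set set \<Rightarrow> bool" where
  "has_cycle F \<longleftrightarrow> (\<exists>vs. length vs \<ge> 3 \<and> distinct vs \<and>
      (\<forall>i < length vs. {vs ! i, vs ! ((i + 1) mod length vs)} \<in> F))"

definition forest :: "'v set set \<Rightarrow> bool" where
  "forest F \<longleftrightarrow> \<not> has_cycle F"

definition forest_decomposition :: "'v set set \<Rightarrow> nat \<Rightarrow> bool" where
  "forest_decomposition E k \<longleftrightarrow> (\<exists>Fs :: nat \<Rightarrow> 'v set set.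
      (\<Union>i<k. Fs i) = E \<and> (\<forall>i<k. forest (Fs i)) \<and>
      (\<forall>i<k. \<forall>j<k. i \<noteq> j \<longrightarrow> Fs i \<inter> Fs j = {}))"

definition arboricity :: "'v set set \<Rightarrow> nat" where
  "arboricity E = (LEAST k. forest_decomposition E k)"

text \<open>An isolated edge is a component isomorphic to K2: an edge sharing no endpoint
  with any other edge.\<close>
definition no_isolated_edges :: "'v set set \<Rightarrow> bool" where
  "no_isolated_edges E \<longleftrightarrow> (\<forall>e\<in>E. \<exists>e'\<in>E. e' \<noteq> e \<and> e \<inter> e' \<noteq> {})"

text \<open>Weighted degree w_f(v) = sum of f over edges incident to v (group written
  multiplicatively in HOL-Algebra).\<close>
definition wsum :: "('b, 'm) monoid_scheme \<Rightarrow> 'v set set \<Rightarrow> ('v set \<Rightarrow> 'b) \<Rightarrow> 'v \<Rightarrow> 'b" where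
  "wsum Gr E f v = finprod Gr f {e \<in> E. v \<in> e}"

definition group_sum_colourable :: "('b, 'm) monoid_scheme \<Rightarrow> 'v set set \<Rightarrow> bool" where
  "group_sum_colourable Gr E \<longleftrightarrow> (\<exists>f. (\<forall>e\<in>E. f e \<in> carrier Gr - {\<one>\<^bsub>Gr\<^esub>}) \<and>
      (\<forall>u v. {u, v} \<in> E \<longrightarrow> u \<noteq> v \<longrightarrow> wsum Gr E f u \<noteq> wsum Gr E f v))"

text \<open>Every finite group is
  isomorphic to one whose carrier consists of natural numbers, so quantifying over
  groups with carrier in nat covers all Abelian groups of order k up to isomorphism.\<close>
definition all_groups_of_order_work :: "'v set set \<Rightarrow> nat \<Rightarrow> bool" where
  "all_groups_of_order_work E k \<longleftrightarrow> (\<forall>Gr :: nat monoid.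
      comm_group Gr \<longrightarrow> finite (carrier Gr) \<longrightarrow> card (carrier Gr) = k \<longrightarrow>
      group_sum_colourable Gr E)"

definition chi_sigma_g_star :: "'v set set \<Rightarrow> nat" where
  "chi_sigma_g_star E = (LEAST k. 0 < k \<and> all_groups_of_order_work E k)"

definition first_primes_gt3 :: "nat \<Rightarrow> nat set" where
  "first_primes_gt3 a = {p. Factorial_Ring.prime p \<and> 3 < p \<and> card {q. Factorial_Ring.prime q \<and> 3 < q \<and> q < p} < a}"

end

(* A graph of arboricity at most a has fewer than a |W| edges inside every vertex set W, so its
   vertices can be ordered such that each vertex has at most D = 2a - 1 earlier neighbours. Every
   abelian group of odd order n >= 2D + 3 = 4a + 1 then admits a labelling, built greedily along
   this ordering: at a vertex w the labels of the edges to the later neighbours of w are chosen,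
   each avoiding at most D + 1 values, and two of them are coupled so as to steer the sum at w
   away from the at most D sums of its earlier neighbours.
   If the only later neighbour of v is a vertex s all of whose neighbours come no later than v,
   the label of vs enters both sums at v and s and cannot separate them; the inequality is
   arranged when the last other neighbour of v or s is processed (one exists since vs is not an
   isolated edge). For two coupled labels it becomes u * u <> K, which excludes at most one u as
   squaring is injective in a group of odd order. Finally p_1 ... p_a is odd and at least
   5^a >= 4a + 1. *)

theory Submission
  imports Defs
begin

lemma card_le_if_subset_Un:
  "finite A \<Longrightarrow> finite B \<Longrightarrow> S \<subseteq> A \<union> B \<Longrightarrow> card S \<le> card A + card B"
  by (meson card_Un_le card_mono finite_UnI le_trans)

lemma ex_not_in_if_card_less:
  assumes "finite S" "card S < card A"
  shows "\<exists>z\<in>A. z \<notin> S"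
  using assms card_mono[OF assms(1)] by (meson not_le subsetI)

section \<open>Abelian groups of odd order\<close>

context comm_group
begin

lemma inv_cancel_twice: "Q \<in> carrier G \<Longrightarrow> u \<in> carrier G \<Longrightarrow> Q \<otimes> inv (Q \<otimes> inv u) = u"
  by (simp add: inv_mult m_assoc[symmetric])

lemma mult_inv_eq_one_imp_eq: "Q \<in> carrier G \<Longrightarrow> u \<in> carrier G \<Longrightarrow> Q \<otimes> inv u = \<one> \<Longrightarrow> u = Q"
  by (metis inv_equality inv_closed inv_inv)

lemma balanced_pair_imp_square:
  assumes "u \<in> carrier G" "Q \<in> carrier G" "b \<in> carrier G" "c \<in> carrier G"
    and "u \<otimes> b = Q \<otimes> inv u \<otimes> c"
  shows "u \<otimes> u = Q \<otimes> c \<otimes> inv b"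
proof -
  have "u \<otimes> u = u \<otimes> u \<otimes> (b \<otimes> inv b)" using assms(1-4) by simp
  also have "\<dots> = (u \<otimes> b) \<otimes> u \<otimes> inv b" by (simp only: m_ac m_closed inv_closed assms(1-4))
  also have "\<dots> = (Q \<otimes> inv u \<otimes> c) \<otimes> u \<otimes> inv b" using assms(5) by simp
  also have "\<dots> = Q \<otimes> c \<otimes> inv b \<otimes> (inv u \<otimes> u)" by (simp only: m_ac m_closed inv_closed assms(1-4))
  also have "\<dots> = Q \<otimes> c \<otimes> inv b" using assms(1-4) by simp
  finally show ?thesis .
qed

lemma finprod_steer_two:
  assumes "finite Y" "a1 \<in> Y" "a2 \<in> Y" "a1 \<noteq> a2" "x \<in> Y \<rightarrow> carrier G"
    and "B \<in> carrier G" "\<sigma> \<in> carrier G" "u \<in> carrier G"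
  defines "Q \<equiv> inv B \<otimes> \<sigma> \<otimes> inv (finprod G x (Y - {a1, a2}))"
  shows "B \<otimes> finprod G (x(a1 := u, a2 := Q \<otimes> inv u)) Y = \<sigma>"
proof -
  define P where "P = finprod G x (Y - {a1, a2})"
  define y where "y = x(a1 := u, a2 := Q \<otimes> inv u)"
  have P: "P \<in> carrier G" unfolding P_def using assms(5) by (auto intro!: finprod_closed)
  have y: "y \<in> Y \<rightarrow> carrier G"
    using assms P unfolding y_def Q_def P_def[symmetric] by (auto simp: Pi_iff)
  have Y: "Y = insert a1 (insert a2 (Y - {a1, a2}))" using assms by blast
  have "finprod G y (Y - {a1, a2}) = P"
    unfolding P_def y_def using assms(5) by (intro finprod_cong') auto
  hence "B \<otimes> finprod G y Y = B \<otimes> (u \<otimes> (Q \<otimes> inv u \<otimes> P))"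
    using assms y by (subst Y) (simp add: y_def Pi_def)
  also have "\<dots> = (B \<otimes> inv B) \<otimes> \<sigma> \<otimes> (inv P \<otimes> P) \<otimes> (u \<otimes> inv u)"
    unfolding Q_def P_def[symmetric] by (simp only: m_ac m_closed inv_closed assms(6-8) P)
  finally show ?thesis using assms P unfolding y_def by simp
qed

end

locale odd_order_group = comm_group G for G (structure) +
  assumes finite_carrier: "finite (carrier G)" and odd_order: "odd (order G)"
begin

lemma square_inj:
  assumes "x \<in> carrier G" "y \<in> carrier G" "x \<otimes> x = y \<otimes> y"
  shows "x = y"
proof -
  define z where "z = x \<otimes> inv y"
  have z: "z \<in> carrier G" using assms by (simp add: z_def)
  have "z \<otimes> z = (x \<otimes> x) \<otimes> inv (y \<otimes> y)"
    using assms(1,2) by (simp add: z_def inv_mult m_ac)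
  also have "\<dots> = (y \<otimes> y) \<otimes> inv (y \<otimes> y)" by (simp only: assms(3))
  also have "\<dots> = \<one>" using assms(2) by (intro r_inv) simp
  finally have zz: "z [^] (2::nat) = \<one>" using z by (simp add: numeral_2_eq_2)
  obtain m where m: "order G = Suc (2 * m)" using odd_order by (metis oddE Suc_eq_plus1)
  have "\<one> = z [^] order G" using z by (simp add: pow_order_eq_1)
  also have "\<dots> = (z [^] (2::nat)) [^] m \<otimes> z" using z m by (simp add: nat_pow_pow)
  finally have "z = \<one>" using zz z by simp
  thus ?thesis using assms unfolding z_def by (metis mult_inv_eq_one_imp_eq)
qed

lemma card_square_roots: "card {u \<in> carrier G. u \<otimes> u = K} \<le> 1"
  using square_inj finite_carrier by (auto simp: card_le_Suc0_iff_eq)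

lemma ex_avoiding_square_root:
  assumes "3 < order G"
  shows "\<exists>u\<in>carrier G. u \<noteq> \<one> \<and> u \<noteq> Q \<and> u \<otimes> u \<noteq> K"
proof -
  have "card ({\<one>, Q} \<union> {u \<in> carrier G. u \<otimes> u = K}) \<le> card {\<one>, Q} + card {u \<in> carrier G. u \<otimes> u = K}"
    using finite_carrier by (intro card_le_if_subset_Un) auto
  also have "\<dots> \<le> 2 + 1" using card_square_roots by (intro add_mono) (auto simp: card_insert_if)
  finally show ?thesis
    using ex_not_in_if_card_less[of "{\<one>, Q} \<union> {u \<in> carrier G. u \<otimes> u = K}" "carrier G"]
      finite_carrier assms unfolding order_def by auto
qed

end

section \<open>Choosing the labels at one vertex\<close>

text \<open>The choice made when the greedy labelling reaches a vertex \<open>w\<close>: \<open>x y\<close> is the label of the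
  edge from \<open>w\<close> to its later neighbour \<open>y \<in> Y\<close>, and \<open>rest y\<close> the sum of the other labels at
  \<open>y\<close>. \<open>B\<close> is the sum of the other labels at \<open>w\<close> and \<open>used\<close> the set of final sums of the earlier
  neighbours of \<open>w\<close>. A vertex \<open>y \<in> closing\<close> gets its final sum \<open>rest y \<otimes> x y\<close> now; it must
  differ from the sum at \<open>w\<close> and from the final sums \<open>T y\<close> of the other neighbours of \<open>y\<close>.
  For \<open>(v, s) \<in> pairs\<close> the partial sums \<open>x v \<otimes> rest v\<close> and \<open>x s \<otimes> pair_rest v s\<close> must
  differ, a label counting as \<open>\<one>\<close> when its vertex is not in \<open>Y\<close>.\<close>

locale forward_choice = odd_order_group G for G (structure) +
  fixes D :: nat and Y :: "'v set" and B :: 'a and used :: "'a set"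
    and closing :: "'v set" and rest :: "'v \<Rightarrow> 'a" and T :: "'v \<Rightarrow> 'a set"
    and pairs :: "('v \<times> 'v) set" and pair_rest :: "'v \<Rightarrow> 'v \<Rightarrow> 'a"
  assumes order_large: "2 * D + 3 \<le> order G" and D_pos: "1 \<le> D"
    and finite_Y: "finite Y" and Y_nonempty: "Y \<noteq> {}"
    and B_closed: "B \<in> carrier G" and finite_used: "finite used" and card_used: "card used \<le> D"
    and closing_subset: "closing \<subseteq> Y"
    and closing_data: "y \<in> closing \<Longrightarrow> rest y \<in> carrier G \<and> finite (T y) \<and> card (T y) \<le> D - 1"
    and pair_data: "(v, s) \<in> pairs \<Longrightarrow> v \<noteq> s \<and> (v \<in> Y \<or> s \<in> Y) \<and> v \<notin> closing \<and> s \<notin> closing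
      \<and> rest v \<in> carrier G \<and> pair_rest v s \<in> carrier G"
    and pairs_disjoint: "(v, s) \<in> pairs \<Longrightarrow> (v', s') \<in> pairs \<Longrightarrow> y \<in> Y \<Longrightarrow> y \<in> {v, s} \<Longrightarrow> y \<in> {v', s'}
      \<Longrightarrow> v = v' \<and> s = s'"
    and singleton_closing: "Y = {y} \<Longrightarrow> y \<in> closing \<Longrightarrow> rest y \<noteq> B"
begin

definition total :: "('v \<Rightarrow> 'a) \<Rightarrow> 'a" where
  "total x = B \<otimes> finprod G x Y"

definition solution :: "('v \<Rightarrow> 'a) \<Rightarrow> bool" where
  "solution x \<longleftrightarrow> (\<forall>y\<in>Y. x y \<in> carrier G - {\<one>}) \<and> total x \<notin> used \<and>
     (\<forall>y\<in>closing. rest y \<otimes> x y \<noteq> total x \<and> rest y \<otimes> x y \<notin> T y) \<and>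
     (\<forall>(v, s)\<in>pairs. (if v \<in> Y then x v else \<one>) \<otimes> rest v \<noteq> (if s \<in> Y then x s else \<one>) \<otimes> pair_rest v s)"

definition inner :: "'v \<Rightarrow> 'v \<Rightarrow> bool" where
  "inner v s \<longleftrightarrow> (v, s) \<in> pairs \<and> v \<in> Y \<and> s \<in> Y"

definition pair_forbidden :: "'v \<Rightarrow> 'a \<Rightarrow> bool" where
  "pair_forbidden y z \<longleftrightarrow> (\<exists>s. (y, s) \<in> pairs \<and> s \<notin> Y \<and> z \<otimes> rest y = pair_rest y s) \<or>
     (\<exists>v. (v, y) \<in> pairs \<and> v \<notin> Y \<and> rest v = z \<otimes> pair_rest v y)"

definition forbidden :: "'v \<Rightarrow> 'a \<Rightarrow> bool" where
  "forbidden y z \<longleftrightarrow> z = \<one> \<or> (y \<in> closing \<and> rest y \<otimes> z \<in> T y) \<or> pair_forbidden y z"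

definition excluded :: "'a \<Rightarrow> 'v \<Rightarrow> 'a \<Rightarrow> bool" where
  "excluded \<sigma> y z \<longleftrightarrow> forbidden y z \<or> (y \<in> closing \<and> rest y \<otimes> z = \<sigma>)"

lemma ex_avoiding:
  assumes "finite S" "card S < 2 * D + 3"
  shows "\<exists>z\<in>carrier G. z \<notin> S"
  using ex_not_in_if_card_less[OF assms(1)] assms(2) order_large unfolding order_def by simp

lemma card_pair_forbidden:
  assumes "y \<in> Y"
  shows "card {z \<in> carrier G. pair_forbidden y z} \<le> 1"
proof -
  have "z1 = z2"
    if z: "z1 \<in> carrier G" "z2 \<in> carrier G" and p: "pair_forbidden y z1" "pair_forbidden y z2"
    for z1 z2
  proof -
    have not_both_ends: False if "(y, s) \<in> pairs" "(v, y) \<in> pairs" for v s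
      using pairs_disjoint[OF that assms] pair_data[OF that(1)] by auto
    show ?thesis
    proof (cases "\<exists>s. (y, s) \<in> pairs \<and> s \<notin> Y \<and> z1 \<otimes> rest y = pair_rest y s")
      case True
      then obtain s where s: "(y, s) \<in> pairs" "z1 \<otimes> rest y = pair_rest y s" by blast
      obtain s' where s': "(y, s') \<in> pairs" "z2 \<otimes> rest y = pair_rest y s'"
        using p(2) not_both_ends[OF s(1)] unfolding pair_forbidden_def by blast
      have "s' = s" using pairs_disjoint[OF s(1) s'(1) assms] by blast
      thus ?thesis using s s' z pair_data[OF s(1)] by (metis r_cancel)
    next
      case False
      then obtain v where v: "(v, y) \<in> pairs" "rest v = z1 \<otimes> pair_rest v y"
        using p(1) unfolding pair_forbidden_def by blast
      obtain v' where v': "(v', y) \<in> pairs" "rest v' = z2 \<otimes> pair_rest v' y"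
        using p(2) not_both_ends[OF _ v(1)] unfolding pair_forbidden_def by blast
      have "v' = v" using pairs_disjoint[OF v(1) v'(1) assms] by blast
      thus ?thesis using v v' z pair_data[OF v(1)] by (metis r_cancel)
    qed
  qed
  thus ?thesis using finite_carrier by (auto simp: card_le_Suc0_iff_eq)
qed

lemma card_excluded:
  assumes "y \<in> Y"
  shows "card {z \<in> carrier G. excluded \<sigma> y z} \<le> D + 1"
proof (cases "y \<in> closing")
  case True
  have cy: "rest y \<in> carrier G" "finite (T y)" "card (T y) \<le> D - 1" using closing_data[OF True] by auto
  have "\<not> pair_forbidden y z" for z using True pair_data unfolding pair_forbidden_def by blast
  hence "{z \<in> carrier G. excluded \<sigma> y z} \<subseteq> {\<one>, inv (rest y) \<otimes> \<sigma>} \<union> (\<otimes>) (inv (rest y)) ` T y"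
    using cy by (force simp: excluded_def forbidden_def m_assoc[symmetric])
  hence "card {z \<in> carrier G. excluded \<sigma> y z} \<le> card {\<one>, inv (rest y) \<otimes> \<sigma>} + card ((\<otimes>) (inv (rest y)) ` T y)"
    using cy by (intro card_le_if_subset_Un) auto
  also have "\<dots> \<le> 2 + (D - 1)"
    using le_trans[OF card_image_le[OF cy(2)] cy(3)] by (intro add_mono) (auto simp: card_insert_if)
  finally show ?thesis using D_pos by linarith
next
  case False
  hence "{z \<in> carrier G. excluded \<sigma> y z} \<subseteq> {\<one>} \<union> {z \<in> carrier G. pair_forbidden y z}"
    by (auto simp: excluded_def forbidden_def)
  hence "card {z \<in> carrier G. excluded \<sigma> y z} \<le> card {\<one>} + card {z \<in> carrier G. pair_forbidden y z}"
    using finite_carrier by (intro card_le_if_subset_Un) auto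
  thus ?thesis using card_pair_forbidden[OF assms] D_pos by simp
qed

lemma inner_unique:
  "inner v s \<Longrightarrow> inner v' s' \<Longrightarrow> y \<in> {v, s} \<Longrightarrow> y \<in> {v', s'} \<Longrightarrow> v = v' \<and> s = s'"
  unfolding inner_def using pairs_disjoint by blast

lemma inner_end_excluded_iff:
  assumes "inner v s" "y \<in> {v, s}"
  shows "excluded \<sigma> y z \<longleftrightarrow> z = \<one>"
proof -
  have "y \<notin> closing" using assms pair_data unfolding inner_def by blast
  moreover have "\<not> pair_forbidden y z"
  proof
    assume "pair_forbidden y z"
    then obtain v' s' where "(v', s') \<in> pairs" "y \<in> {v', s'}" "v' \<notin> Y \<or> s' \<notin> Y"
      unfolding pair_forbidden_def by blast
    thus False using pairs_disjoint[of v s v' s' y] assms unfolding inner_def by blast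
  qed
  ultimately show ?thesis unfolding excluded_def forbidden_def by blast
qed

lemma solutionI:
  assumes "\<And>y. y \<in> Y \<Longrightarrow> x y \<in> carrier G \<and> \<not> excluded (total x) y (x y)"
    and "\<And>v s. inner v s \<Longrightarrow> x v \<otimes> rest v \<noteq> x s \<otimes> pair_rest v s"
    and "total x \<notin> used"
  shows "solution x"
proof -
  have "(if v \<in> Y then x v else \<one>) \<otimes> rest v \<noteq> (if s \<in> Y then x s else \<one>) \<otimes> pair_rest v s"
    if p: "(v, s) \<in> pairs" for v s
  proof (cases "v \<in> Y \<and> s \<in> Y")
    case True thus ?thesis using assms(2) p unfolding inner_def by simp
  next
    case False
    hence "v \<in> Y \<and> s \<notin> Y \<or> v \<notin> Y \<and> s \<in> Y" using pair_data[OF p] by blast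
    thus ?thesis using assms(1)[of v] assms(1)[of s] pair_data[OF p] p
      unfolding excluded_def forbidden_def pair_forbidden_def by auto
  qed
  thus ?thesis using assms closing_subset unfolding solution_def excluded_def forbidden_def by blast
qed

lemma partial_solution_exists:
  "\<exists>x. (\<forall>y\<in>Y. x y \<in> carrier G \<and> \<not> excluded \<sigma> y (x y)) \<and>
     (\<forall>v s. inner v s \<longrightarrow> x v \<otimes> rest v \<noteq> x s \<otimes> pair_rest v s)"
proof -
  obtain g where g: "g \<in> carrier G" "g \<noteq> \<one>" using ex_avoiding[of "{\<one>}"] by auto
  define ok where "ok y z \<longleftrightarrow> \<not> excluded \<sigma> y z \<and> (\<forall>v. inner v y \<longrightarrow> g \<otimes> rest v \<noteq> z \<otimes> pair_rest v y)" for y z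
  have ok: "\<exists>z. z \<in> carrier G \<and> ok y z" if y: "y \<in> Y" for y
  proof -
    have "card {z \<in> carrier G. \<exists>v. inner v y \<and> g \<otimes> rest v = z \<otimes> pair_rest v y} \<le> 1"
      using inner_unique[of _ y _ _ y] pair_data finite_carrier unfolding inner_def
      by (auto simp: card_le_Suc0_iff_eq) (metis r_cancel)
    moreover have "{z \<in> carrier G. \<not> ok y z} \<subseteq>
        {z \<in> carrier G. excluded \<sigma> y z} \<union> {z \<in> carrier G. \<exists>v. inner v y \<and> g \<otimes> rest v = z \<otimes> pair_rest v y}"
      unfolding ok_def by blast
    hence "card {z \<in> carrier G. \<not> ok y z} \<le> card {z \<in> carrier G. excluded \<sigma> y z}
        + card {z \<in> carrier G. \<exists>v. inner v y \<and> g \<otimes> rest v = z \<otimes> pair_rest v y}"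
      using finite_carrier by (intro card_le_if_subset_Un) auto
    ultimately have "card {z \<in> carrier G. \<not> ok y z} \<le> (D + 1) + 1"
      using card_excluded[OF y, of \<sigma>] by linarith
    thus ?thesis using ex_avoiding[of "{z \<in> carrier G. \<not> ok y z}"] finite_carrier by auto
  qed
  define x where "x y = (if \<exists>s. inner y s then g else SOME z. z \<in> carrier G \<and> ok y z)" for y
  have x: "x y \<in> carrier G \<and> ok y (x y)" if "y \<in> Y" "\<nexists>s. inner y s" for y
    unfolding x_def using that someI_ex[OF ok[OF that(1)]] by auto
  have "x y \<in> carrier G \<and> \<not> excluded \<sigma> y (x y)" if y: "y \<in> Y" for y
  proof (cases "\<exists>s. inner y s")
    case True thus ?thesis using g inner_end_excluded_iff[of y _ y] unfolding x_def by auto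
  next
    case False thus ?thesis using x[OF y] unfolding ok_def by blast
  qed
  moreover have "x v \<otimes> rest v \<noteq> x s \<otimes> pair_rest v s" if vs: "inner v s" for v s
  proof -
    have "\<nexists>s'. inner s s'" using inner_unique[OF vs, of s _ s] vs pair_data unfolding inner_def by blast
    hence "ok s (x s)" using x[of s] vs unfolding inner_def by blast
    moreover have "x v = g" unfolding x_def using vs by auto
    ultimately show ?thesis using vs unfolding ok_def by simp
  qed
  ultimately show ?thesis by blast
qed

lemma ex_unused: "\<exists>\<sigma>\<in>carrier G. \<sigma> \<notin> used"
  using ex_avoiding[OF finite_used] card_used by simp

lemma solution_exists_if_inner:
  assumes inner0: "inner v0 s0"
  shows "\<exists>x. solution x"
proof -
  obtain \<sigma> where \<sigma>: "\<sigma> \<in> carrier G" "\<sigma> \<notin> used" using ex_unused by blast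
  obtain x0 where x0: "\<forall>y\<in>Y. x0 y \<in> carrier G \<and> \<not> excluded \<sigma> y (x0 y)"
    "\<forall>v s. inner v s \<longrightarrow> x0 v \<otimes> rest v \<noteq> x0 s \<otimes> pair_rest v s"
    using partial_solution_exists by blast
  have x0_closed: "x0 \<in> Y \<rightarrow> carrier G" using x0(1) by blast
  have v0s0: "v0 \<in> Y" "s0 \<in> Y" "v0 \<noteq> s0" "rest v0 \<in> carrier G" "pair_rest v0 s0 \<in> carrier G"
    using inner0 pair_data unfolding inner_def by auto
  define Q where "Q = inv B \<otimes> \<sigma> \<otimes> inv (finprod G x0 (Y - {v0, s0}))"
  have Q: "Q \<in> carrier G" unfolding Q_def using x0_closed \<sigma> B_closed by (auto intro!: finprod_closed)
  \<comment> \<open>With \<open>x s0 = Q \<otimes> inv (x v0)\<close> the constraint of the pair \<open>(v0, s0)\<close> reads \<open>x v0 \<otimes> x v0 \<noteq> K\<close>.\<close>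
  define K where "K = Q \<otimes> pair_rest v0 s0 \<otimes> inv (rest v0)"
  obtain u where u: "u \<in> carrier G" "u \<noteq> \<one>" "u \<noteq> Q" "u \<otimes> u \<noteq> K"
    using ex_avoiding_square_root[of Q K] order_large D_pos by auto
  define x where "x = x0(v0 := u, s0 := Q \<otimes> inv u)"
  have total: "total x = \<sigma>"
    unfolding total_def x_def Q_def using finprod_steer_two[OF finite_Y v0s0(1-3) x0_closed B_closed \<sigma>(1) u(1)] .
  have others: "x y = x0 y" if "y \<notin> {v0, s0}" for y using that unfolding x_def by auto
  show ?thesis
  proof (rule exI, rule solutionI)
    fix y assume y: "y \<in> Y"
    show "x y \<in> carrier G \<and> \<not> excluded (total x) y (x y)"
    proof (cases "y \<in> {v0, s0}")
      case True
      have "x y \<in> carrier G - {\<one>}"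
        using True u Q mult_inv_eq_one_imp_eq[OF Q u(1)] v0s0(3) unfolding x_def by auto
      thus ?thesis using inner_end_excluded_iff[OF inner0 True] by blast
    next
      case False thus ?thesis using x0(1) y others total by simp
    qed
  next
    fix v s assume vs: "inner v s"
    show "x v \<otimes> rest v \<noteq> x s \<otimes> pair_rest v s"
    proof (cases "(v, s) = (v0, s0)")
      case True
      have "u \<otimes> rest v0 \<noteq> Q \<otimes> inv u \<otimes> pair_rest v0 s0"
        using balanced_pair_imp_square[OF u(1) Q v0s0(4,5)] u unfolding K_def by blast
      thus ?thesis using True v0s0(3) unfolding x_def by simp
    next
      case False
      hence "v \<notin> {v0, s0}" "s \<notin> {v0, s0}" using inner_unique[OF vs inner0] by blast+
      thus ?thesis using x0(2) vs others by simp
    qed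
  next
    show "total x \<notin> used" using total \<sigma> by simp
  qed
qed

lemma solution_exists_if_no_inner:
  assumes no_inner: "\<nexists>v s. inner v s" and a: "a1 \<in> Y" "a2 \<in> Y" "a1 \<noteq> a2"
  shows "\<exists>x. solution x"
proof -
  obtain \<sigma> where \<sigma>: "\<sigma> \<in> carrier G" "\<sigma> \<notin> used" using ex_unused by blast
  obtain x0 where x0: "\<forall>y\<in>Y. x0 y \<in> carrier G \<and> \<not> excluded \<sigma> y (x0 y)"
    using partial_solution_exists by blast
  have x0_closed: "x0 \<in> Y \<rightarrow> carrier G" using x0(1) by blast
  define Q where "Q = inv B \<otimes> \<sigma> \<otimes> inv (finprod G x0 (Y - {a1, a2}))"
  have Q: "Q \<in> carrier G" unfolding Q_def using x0_closed \<sigma> B_closed by (auto intro!: finprod_closed)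
  define S where "S = {z \<in> carrier G. excluded \<sigma> a1 z} \<union> (\<lambda>z. Q \<otimes> inv z) ` {z \<in> carrier G. excluded \<sigma> a2 z}"
  have "card S \<le> card {z \<in> carrier G. excluded \<sigma> a1 z} + card ((\<lambda>z. Q \<otimes> inv z) ` {z \<in> carrier G. excluded \<sigma> a2 z})"
    unfolding S_def using finite_carrier by (intro card_le_if_subset_Un) auto
  also have "\<dots> \<le> (D + 1) + (D + 1)"
    using card_excluded[OF a(1), of \<sigma>] card_excluded[OF a(2), of \<sigma>] finite_carrier
      card_image_le[of "{z \<in> carrier G. excluded \<sigma> a2 z}" "\<lambda>z. Q \<otimes> inv z"]
    by simp
  finally obtain u where u: "u \<in> carrier G" "u \<notin> S"
    using ex_avoiding[of S] finite_carrier unfolding S_def by auto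
  define x where "x = x0(a1 := u, a2 := Q \<otimes> inv u)"
  have total: "total x = \<sigma>"
    unfolding total_def x_def Q_def using finprod_steer_two[OF finite_Y a x0_closed B_closed \<sigma>(1) u(1)] .
  show ?thesis
  proof (rule exI, rule solutionI)
    fix y assume y: "y \<in> Y"
    show "x y \<in> carrier G \<and> \<not> excluded (total x) y (x y)"
    proof (cases "y = a2")
      case True
      have "Q \<otimes> inv (Q \<otimes> inv u) = u" using inv_cancel_twice[OF Q u(1)] .
      hence "\<not> excluded \<sigma> a2 (Q \<otimes> inv u)"
        using u(2) Q u(1) unfolding S_def by (metis (lifting) image_eqI inv_closed m_closed mem_Collect_eq UnI2)
      thus ?thesis using True Q u(1) total unfolding x_def by simp
    next
      case False
      thus ?thesis using x0 y total u unfolding x_def S_def by (cases "y = a1") auto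
    qed
  next
    fix v s assume "inner v s"
    thus "x v \<otimes> rest v \<noteq> x s \<otimes> pair_rest v s" using no_inner by blast
  next
    show "total x \<notin> used" using total \<sigma> by simp
  qed
qed

lemma solution_exists_if_singleton:
  assumes Y: "Y = {y}"
  shows "\<exists>x. solution x"
proof -
  have "{z \<in> carrier G. forbidden y z} \<subseteq> {z \<in> carrier G. excluded \<one> y z}" unfolding excluded_def by blast
  hence "card {z \<in> carrier G. forbidden y z} \<le> card {z \<in> carrier G. excluded \<one> y z}"
    using finite_carrier by (intro card_mono) auto
  also have "\<dots> \<le> D + 1" using card_excluded Y by simp
  finally have "card {z \<in> carrier G. forbidden y z} + card ((\<otimes>) (inv B) ` used) \<le> (D + 1) + D"
    using card_image_le[OF finite_used, of "(\<otimes>) (inv B)"] card_used by linarith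
  moreover have "card ({z \<in> carrier G. forbidden y z} \<union> (\<otimes>) (inv B) ` used)
      \<le> card {z \<in> carrier G. forbidden y z} + card ((\<otimes>) (inv B) ` used)"
    using finite_carrier finite_used by (intro card_le_if_subset_Un) auto
  ultimately have "card ({z \<in> carrier G. forbidden y z} \<union> (\<otimes>) (inv B) ` used) \<le> (D + 1) + D"
    by linarith
  then obtain z where z: "z \<in> carrier G" "\<not> forbidden y z" "z \<notin> (\<otimes>) (inv B) ` used"
    using ex_avoiding[of "{z \<in> carrier G. forbidden y z} \<union> (\<otimes>) (inv B) ` used"] finite_carrier finite_used
    by auto
  define x where "x = (\<lambda>_::'v. z)"
  have total: "total x = B \<otimes> z" unfolding total_def x_def using z by (simp add: Y)
  show ?thesis
  proof (rule exI, rule solutionI)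
    fix y' assume "y' \<in> Y"
    hence y': "y' = y" using Y by simp
    have "rest y \<otimes> z \<noteq> B \<otimes> z" if "y \<in> closing"
      using singleton_closing[OF Y that] closing_data[OF that] z(1) B_closed r_cancel by blast
    thus "x y' \<in> carrier G \<and> \<not> excluded (total x) y' (x y')" using z y' total unfolding x_def excluded_def by auto
  next
    fix v s assume "inner v s"
    thus "x v \<otimes> rest v \<noteq> x s \<otimes> pair_rest v s" using pair_data Y unfolding inner_def by auto
  next
    have "inv B \<otimes> (B \<otimes> z) = z" using B_closed z(1) by (simp add: m_assoc[symmetric])
    thus "total x \<notin> used" using total z(3) by (metis image_eqI)
  qed
qed

lemma solution_exists: "\<exists>x. solution x"
proof (cases "\<exists>v s. inner v s")
  case True thus ?thesis using solution_exists_if_inner by blast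
next
  case no_inner: False
  show ?thesis
  proof (cases "\<exists>a1\<in>Y. \<exists>a2\<in>Y. a1 \<noteq> a2")
    case True thus ?thesis using solution_exists_if_no_inner[OF no_inner] by blast
  next
    case False
    then obtain y where "Y = {y}" using Y_nonempty by blast
    thus ?thesis by (rule solution_exists_if_singleton)
  qed
qed

end

section \<open>Forests and degeneracy\<close>

lemma simple_graph_edgeD:
  assumes "simple_graph V E" "{u, v} \<in> E"
  shows "u \<noteq> v" "u \<in> V" "v \<in> V"
proof -
  obtain a b where "{u, v} = {a, b}" "a \<noteq> b" "a \<in> V" "b \<in> V"
    using assms unfolding simple_graph_def by blast
  thus "u \<noteq> v" "u \<in> V" "v \<in> V" by (auto simp: doubleton_eq_iff)
qed

lemma simple_graph_edgeE:
  assumes "simple_graph V E" "e \<in> E" "z \<in> e"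
  obtains t where "e = {z, t}" "t \<noteq> z"
proof -
  obtain a b where ab: "e = {a, b}" "a \<noteq> b" using assms unfolding simple_graph_def by blast
  show ?thesis
  proof (cases "z = a")
    case True thus ?thesis using that[of b] ab by blast
  next
    case False thus ?thesis using that[of a] ab assms(3) by (auto simp: insert_commute)
  qed
qed

lemma simple_graph_finite_edges:
  assumes "simple_graph V E"
  shows "finite E"
proof (rule finite_subset)
  show "E \<subseteq> Pow V"
  proof
    fix e assume "e \<in> E"
    then obtain u v where "e = {u, v}" "u \<in> V" "v \<in> V" using assms unfolding simple_graph_def by blast
    thus "e \<in> Pow V" by simp
  qed
  show "finite (Pow V)" using assms unfolding simple_graph_def by simp
qed

lemma simple_graph_subset: "simple_graph W F \<Longrightarrow> F' \<subseteq> F \<Longrightarrow> simple_graph W F'"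
  unfolding simple_graph_def by blast

lemma simple_graph_induced:
  assumes "simple_graph V E" "W \<subseteq> V"
  shows "simple_graph W {e \<in> E. e \<subseteq> W}"
  unfolding simple_graph_def
proof
  show "finite W" using assms(1) finite_subset[OF assms(2)] unfolding simple_graph_def by simp
  show "\<forall>e\<in>{e \<in> E. e \<subseteq> W}. \<exists>u v. e = {u, v} \<and> u \<noteq> v \<and> u \<in> W \<and> v \<in> W"
  proof
    fix e assume "e \<in> {e \<in> E. e \<subseteq> W}"
    hence e: "e \<in> E" "e \<subseteq> W" by simp_all
    then obtain u v where "e = {u, v}" "u \<noteq> v" using assms(1) unfolding simple_graph_def by meson
    thus "\<exists>u v. e = {u, v} \<and> u \<noteq> v \<and> u \<in> W \<and> v \<in> W" using e(2) by auto
  qed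
qed

lemma has_cycle_mono: "F' \<subseteq> F \<Longrightarrow> has_cycle F' \<Longrightarrow> has_cycle F"
  unfolding has_cycle_def by blast

lemma has_cycleI:
  assumes "distinct vs" "3 \<le> length vs" "successively (\<lambda>x y. {x, y} \<in> F) vs" "{last vs, hd vs} \<in> F"
  shows "has_cycle F"
  unfolding has_cycle_def
proof (intro exI conjI allI impI)
  fix i assume i: "i < length vs"
  show "{vs ! i, vs ! ((i + 1) mod length vs)} \<in> F"
  proof (cases "Suc i < length vs")
    case True thus ?thesis using successively_nth[OF assms(3)] by simp
  next
    case False
    hence "Suc i = length vs" using i by simp
    hence "i = length vs - 1" "(i + 1) mod length vs = 0" by simp_all
    moreover have "vs \<noteq> []" using assms(2) by auto
    ultimately show ?thesis using assms(4) by (simp add: last_conv_nth hd_conv_nth)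
  qed
qed (use assms in auto)

lemma forest_has_leaf:
  assumes W: "simple_graph W F" "W \<noteq> {}" and acyclic: "\<not> has_cycle F"
  shows "\<exists>z\<in>W. card {e \<in> F. z \<in> e} \<le> 1"
proof -
  define path where
    "path ps \<longleftrightarrow> ps \<noteq> [] \<and> distinct ps \<and> set ps \<subseteq> W \<and> successively (\<lambda>x y. {x, y} \<in> F) ps" for ps
  have finite_W: "finite W" using W(1) unfolding simple_graph_def by blast
  have short: "length ps < Suc (card W)" if "path ps" for ps
    using that card_mono[OF finite_W] distinct_card unfolding path_def by (metis le_imp_less_Suc)
  obtain z where "z \<in> W" using W(2) by blast
  hence "path [z]" unfolding path_def by simp
  then obtain ps where ps: "path ps" and longest: "\<And>qs. path qs \<Longrightarrow> length qs \<le> length ps"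
    using ex_has_greatest_nat[of path "[z]" length] short by metis
  \<comment> \<open>A neighbour of the end of a longest path lies on the path; unless it is the predecessor,
    it closes a cycle.\<close>
  define x where "x = last ps"
  have x: "x \<in> W" "x = ps ! (length ps - 1)"
    using ps unfolding path_def x_def by (auto simp: last_conv_nth)
  have "{e \<in> F. x \<in> e} \<subseteq> {{x, ps ! (length ps - 2)}}"
  proof
    fix e assume e: "e \<in> {e \<in> F. x \<in> e}"
    then obtain t where t: "e = {x, t}" "t \<noteq> x" using simple_graph_edgeE[OF W(1)] by blast
    have "t \<in> set ps"
    proof (rule ccontr)
      assume "t \<notin> set ps"
      moreover have "t \<in> W" using simple_graph_edgeD[OF W(1)] e t by blast
      ultimately have "path (ps @ [t])"
        using ps e t unfolding path_def x_def by (auto simp: successively_append_iff)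
      thus False using longest by fastforce
    qed
    then obtain j where j: "j < length ps" "ps ! j = t" by (auto simp: in_set_conv_nth)
    have "j \<noteq> length ps - 1" using j t(2) x(2) by auto
    moreover have "\<not> j + 3 \<le> length ps"
    proof
      assume "j + 3 \<le> length ps"
      moreover have "last (drop j ps) = x" "hd (drop j ps) = t" using j x_def by (auto simp: hd_drop_conv_nth)
      ultimately have "has_cycle F" using ps e t unfolding path_def
        by (intro has_cycleI[of "drop j ps"]) (auto simp: successively_conv_nth insert_commute)
      thus False using acyclic by blast
    qed
    ultimately have "j = length ps - 2" using j(1) by linarith
    thus "e \<in> {{x, ps ! (length ps - 2)}}" using t j by simp
  qed
  hence "card {e \<in> F. x \<in> e} \<le> 1" using card_mono[of "{{x, ps ! (length ps - 2)}}"] by fastforce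
  thus ?thesis using x by blast
qed

lemma card_forest_edges:
  assumes "simple_graph W F" "W \<noteq> {}" "\<not> has_cycle F"
  shows "card F \<le> card W - 1"
  using assms
proof (induction "card W" arbitrary: W F rule: less_induct)
  case less
  have finite_W: "finite W" using less(2) unfolding simple_graph_def by blast
  obtain z where z: "z \<in> W" "card {e \<in> F. z \<in> e} \<le> 1" using forest_has_leaf less(2-4) by blast
  show ?case
  proof (cases "W = {z}")
    case True
    hence "F = {}" using less(2) unfolding simple_graph_def by blast
    thus ?thesis by simp
  next
    case False
    define W' where "W' = W - {z}"
    define F' where "F' = {e \<in> F. z \<notin> e}"
    have W': "card W' = card W - 1" "W' \<noteq> {}" using z(1) False finite_W unfolding W'_def by auto
    have "simple_graph W' F'" using less(2) unfolding simple_graph_def W'_def F'_def by blast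
    moreover have "\<not> has_cycle F'" using less(4) has_cycle_mono[of F' F] unfolding F'_def by blast
    moreover have "card W' < card W" "0 < card W'"
      using W' finite_W unfolding W'_def by (auto simp: card_gt_0_iff)
    ultimately have "card F' \<le> card W' - 1" using less(1) W'(2) by blast
    moreover have "F = F' \<union> {e \<in> F. z \<in> e}" unfolding F'_def by blast
    hence "card F \<le> card F' + card {e \<in> F. z \<in> e}" using card_Un_le by metis
    ultimately show ?thesis using z(2) W' \<open>0 < card W'\<close> by linarith
  qed
qed

lemma sum_degrees_within:
  assumes G: "simple_graph V E" and W: "W \<subseteq> V"
  shows "(\<Sum>z\<in>W. card {u \<in> W. {u, z} \<in> E}) = 2 * card {e \<in> E. e \<subseteq> W}"
proof -
  define EW where "EW = {e \<in> E. e \<subseteq> W}"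
  have finite_W: "finite W" using G W finite_subset unfolding simple_graph_def by blast
  have finite_EW: "finite EW" using simple_graph_finite_edges[OF G] unfolding EW_def by simp
  have degree: "card {u \<in> W. {u, z} \<in> E} = card {e \<in> EW. z \<in> e}" if z: "z \<in> W" for z
  proof -
    have "(\<lambda>u. {u, z}) ` {u \<in> W. {u, z} \<in> E} = {e \<in> EW. z \<in> e}"
    proof
      show "{e \<in> EW. z \<in> e} \<subseteq> (\<lambda>u. {u, z}) ` {u \<in> W. {u, z} \<in> E}"
      proof
        fix e assume e: "e \<in> {e \<in> EW. z \<in> e}"
        then obtain t where t: "e = {z, t}" using simple_graph_edgeE[OF G] unfolding EW_def by blast
        hence "e = {t, z}" "t \<in> W" using e unfolding EW_def by auto
        thus "e \<in> (\<lambda>u. {u, z}) ` {u \<in> W. {u, z} \<in> E}" using e unfolding EW_def by blast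
      qed
      show "(\<lambda>u. {u, z}) ` {u \<in> W. {u, z} \<in> E} \<subseteq> {e \<in> EW. z \<in> e}"
        using z unfolding EW_def by blast
    qed
    moreover have "inj_on (\<lambda>u. {u, z}) {u \<in> W. {u, z} \<in> E}" by (auto simp: inj_on_def doubleton_eq_iff)
    ultimately show ?thesis using card_image by fastforce
  qed
  have two: "card {z \<in> W. z \<in> e} = 2" if e: "e \<in> EW" for e
  proof -
    have "e \<in> E" "e \<subseteq> W" using e unfolding EW_def by auto
    then obtain u v where "e = {u, v}" "u \<noteq> v" using G unfolding simple_graph_def by blast
    moreover have "{z \<in> W. z \<in> e} = e" using \<open>e \<subseteq> W\<close> by blast
    ultimately show ?thesis by simp
  qed
  have count: "card {x \<in> A. P x} = (\<Sum>x\<in>A. if P x then 1 else 0)" if "finite A" for A and P :: "'b \<Rightarrow> bool"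
    using sum.inter_filter[OF that, of "\<lambda>_. 1 :: nat" P] by simp
  have "(\<Sum>z\<in>W. card {u \<in> W. {u, z} \<in> E}) = (\<Sum>z\<in>W. \<Sum>e\<in>EW. if z \<in> e then 1 else 0)"
    using degree count[OF finite_EW] by (intro sum.cong) auto
  also have "\<dots> = (\<Sum>e\<in>EW. \<Sum>z\<in>W. if z \<in> e then 1 else 0)" by (rule sum.swap)
  also have "\<dots> = (\<Sum>e\<in>EW. 2)" using two count[OF finite_W] by (intro sum.cong) auto
  finally show ?thesis unfolding EW_def by simp
qed

lemma low_degree_vertex:
  assumes G: "simple_graph V E" and forests: "forest_decomposition E a" and a: "0 < a"
    and W: "W \<subseteq> V" "W \<noteq> {}"
  shows "\<exists>z\<in>W. card {u \<in> W. {u, z} \<in> E} \<le> 2 * a - 1"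
proof (rule ccontr)
  assume "\<not> ?thesis"
  hence high: "2 * a \<le> card {u \<in> W. {u, z} \<in> E}" if "z \<in> W" for z using that a by fastforce
  define EW where "EW = {e \<in> E. e \<subseteq> W}"
  obtain Fs where Fs: "(\<Union>i<a. Fs i) = E" "\<forall>i<a. forest (Fs i)"
    using forests unfolding forest_decomposition_def by blast
  have finite_W: "finite W" using simple_graph_induced[OF G W(1)] unfolding simple_graph_def by simp
  have "card (Fs i \<inter> EW) \<le> card W - 1" if i: "i < a" for i
  proof (rule card_forest_edges)
    show "simple_graph W (Fs i \<inter> EW)"
      by (rule simple_graph_subset[OF simple_graph_induced[OF G W(1)]]) (auto simp: EW_def)
    show "\<not> has_cycle (Fs i \<inter> EW)"
      using Fs(2) i has_cycle_mono[of "Fs i \<inter> EW" "Fs i"] unfolding forest_def by blast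
  qed (use W in simp)
  hence "(\<Sum>i<a. card (Fs i \<inter> EW)) \<le> (\<Sum>i<a. card W - 1)" by (intro sum_mono) simp
  moreover have "EW = (\<Union>i<a. Fs i \<inter> EW)" using Fs(1) unfolding EW_def by blast
  hence "card EW \<le> (\<Sum>i<a. card (Fs i \<inter> EW))"
    using card_UN_le[of "{..<a}" "\<lambda>i. Fs i \<inter> EW"] by (metis finite_lessThan)
  ultimately have "card EW \<le> a * (card W - 1)" by simp
  moreover have "(\<Sum>z\<in>W. 2 * a) \<le> (\<Sum>z\<in>W. card {u \<in> W. {u, z} \<in> E})" using high by (rule sum_mono)
  hence "a * card W \<le> card EW" using sum_degrees_within[OF G W(1)] unfolding EW_def by (simp add: mult.commute)
  ultimately have "a * card W \<le> a * (card W - 1)" by linarith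
  hence "card W \<le> card W - 1" using a by simp
  moreover have "0 < card W" using finite_W W(2) by (simp add: card_gt_0_iff)
  ultimately show False by linarith
qed

lemma degeneracy_ordering:
  fixes V :: "'v set"
  assumes finite_V: "finite V"
    and low: "\<And>W. W \<subseteq> V \<Longrightarrow> W \<noteq> {} \<Longrightarrow> \<exists>z\<in>W. card {u \<in> W. {u, z} \<in> E} \<le> D"
  shows "\<exists>pos :: 'v \<Rightarrow> nat. inj_on pos V \<and> (\<forall>v\<in>V. card {u \<in> V. {u, v} \<in> E \<and> pos u < pos v} \<le> D)"
  using finite_V
proof (induction V rule: finite_remove_induct)
  case empty show ?case by simp
next
  case (remove A)
  obtain z where z: "z \<in> A" "card {u \<in> A. {u, z} \<in> E} \<le> D" using low remove.hyps by blast
  obtain pos :: "'v \<Rightarrow> nat" where pos: "inj_on pos (A - {z})"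
    "\<forall>v\<in>A - {z}. card {u \<in> A - {z}. {u, v} \<in> E \<and> pos u < pos v} \<le> D"
    using remove.IH[OF z(1)] by blast
  define M where "M = Suc (Max (insert 0 (pos ` (A - {z}))))"
  define pos' where "pos' = pos(z := M)"
  have below: "pos' u < M" if "u \<in> A - {z}" for u
  proof -
    have "pos u \<le> Max (insert 0 (pos ` (A - {z})))" using that remove.hyps(1) by simp
    thus ?thesis using that unfolding M_def pos'_def by simp
  qed
  have "inj_on pos' A"
  proof (rule inj_onI)
    fix u v assume uv: "u \<in> A" "v \<in> A" "pos' u = pos' v"
    have "pos' z = M" unfolding pos'_def by simp
    hence "u = z \<longleftrightarrow> v = z" using uv below by (metis DiffI less_irrefl singletonD)
    thus "u = v" using uv pos(1) unfolding pos'_def inj_on_def by auto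
  qed
  moreover have "card {u \<in> A. {u, v} \<in> E \<and> pos' u < pos' v} \<le> D" if v: "v \<in> A" for v
  proof (cases "v = z")
    case True
    have "card {u \<in> A. {u, v} \<in> E \<and> pos' u < pos' v} \<le> card {u \<in> A. {u, z} \<in> E}"
      using True remove.hyps(1) by (intro card_mono) auto
    thus ?thesis using z(2) by simp
  next
    case False
    have "{u \<in> A. {u, v} \<in> E \<and> pos' u < pos' v} = {u \<in> A - {z}. {u, v} \<in> E \<and> pos u < pos v}"
      using below[of v] v False unfolding pos'_def by auto
    thus ?thesis using pos(2) v False by simp
  qed
  ultimately show ?case by blast
qed

lemma forest_empty: "forest {}"
  unfolding forest_def has_cycle_def by force

lemma forest_singleton: "forest {e}"
  unfolding forest_def has_cycle_def
proof clarify
  fix vs assume vs: "3 \<le> length vs" "distinct vs"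
    "\<forall>i<length vs. {vs ! i, vs ! ((i + 1) mod length vs)} \<in> {e}"
  have ne: "vs \<noteq> []" using vs(1) by auto
  hence "{vs ! 0, vs ! 1} = e" using vs(1) vs(3)[rule_format, of 0] by simp
  moreover have "{vs ! 1, vs ! 2} = e" using vs(1) vs(3)[rule_format, of 1] by (simp add: numeral_2_eq_2)
  ultimately have "vs ! 0 = vs ! 2 \<or> vs ! 0 = vs ! 1" by (auto simp: doubleton_eq_iff)
  moreover have "vs ! 0 \<noteq> vs ! 1" "vs ! 0 \<noteq> vs ! 2"
    using nth_eq_iff_index_eq[OF vs(2), of 0 1] nth_eq_iff_index_eq[OF vs(2), of 0 2] vs(1) ne by auto
  ultimately show False by blast
qed

lemma forest_decomposition_singletons: "finite E \<Longrightarrow> forest_decomposition E (card E)"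
proof -
  assume "finite E"
  then obtain h where h: "bij_betw h {..<card E} E" using bij_betw_from_nat_into_finite by blast
  show ?thesis unfolding forest_decomposition_def
  proof (intro exI[of _ "\<lambda>i. {h i}"] conjI allI impI)
    show "(\<Union>i<card E. {h i}) = E" using h unfolding bij_betw_def by auto
    show "\<And>i j. i < card E \<Longrightarrow> j < card E \<Longrightarrow> i \<noteq> j \<Longrightarrow> {h i} \<inter> {h j} = {}"
      using h unfolding bij_betw_def inj_on_def by auto
  qed (rule forest_singleton)
qed

lemma forest_decomposition_mono:
  assumes "forest_decomposition E k" "k \<le> a"
  shows "forest_decomposition E a"
proof -
  obtain Fs where Fs: "(\<Union>i<k. Fs i) = E" "\<forall>i<k. forest (Fs i)"
    "\<forall>i<k. \<forall>j<k. i \<noteq> j \<longrightarrow> Fs i \<inter> Fs j = {}" using assms(1) unfolding forest_decomposition_def by blast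
  define Fs' where "Fs' i = (if i < k then Fs i else {})" for i
  have "(\<Union>i<a. Fs' i) = E"
  proof
    show "(\<Union>i<a. Fs' i) \<subseteq> E" using Fs(1) unfolding Fs'_def by auto
    show "E \<subseteq> (\<Union>i<a. Fs' i)"
    proof
      fix e assume "e \<in> E"
      then obtain i where "i < k" "e \<in> Fs i" using Fs(1) by blast
      thus "e \<in> (\<Union>i<a. Fs' i)" using assms(2) unfolding Fs'_def by force
    qed
  qed
  moreover have "\<forall>i<a. forest (Fs' i)" using Fs(2) forest_empty unfolding Fs'_def by auto
  moreover have "\<forall>i<a. \<forall>j<a. i \<noteq> j \<longrightarrow> Fs' i \<inter> Fs' j = {}" using Fs(3) unfolding Fs'_def by simp
  ultimately show ?thesis unfolding forest_decomposition_def by blast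
qed

lemma forest_decomposition_if_arboricity_le:
  assumes "finite E" "arboricity E \<le> a"
  shows "forest_decomposition E a"
proof -
  have "forest_decomposition E (arboricity E)"
    unfolding arboricity_def using forest_decomposition_singletons[OF assms(1)] by (rule LeastI)
  thus ?thesis using forest_decomposition_mono assms(2) by blast
qed

lemma degeneracy_ordering_if_arboricity_le:
  fixes V :: "'v set"
  assumes "simple_graph V E" "0 < a" "arboricity E \<le> a"
  shows "\<exists>pos :: 'v \<Rightarrow> nat. inj_on pos V \<and>
    (\<forall>v\<in>V. card {u \<in> V. {u, v} \<in> E \<and> pos u < pos v} \<le> 2 * a - 1)"
proof -
  have "forest_decomposition E a"
    using forest_decomposition_if_arboricity_le simple_graph_finite_edges assms(1,3) by blast
  hence "\<exists>z\<in>W. card {u \<in> W. {u, z} \<in> E} \<le> 2 * a - 1" if "W \<subseteq> V" "W \<noteq> {}" for W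
    using low_degree_vertex[OF assms(1) _ assms(2) that] by blast
  moreover have "finite V" using assms(1) unfolding simple_graph_def by simp
  ultimately show ?thesis using degeneracy_ordering by blast
qed

section \<open>Greedy labelling along a degeneracy ordering\<close>

locale ordered_graph =
  fixes V :: "'v set" and E :: "'v set set" and pos :: "'v \<Rightarrow> nat" and D :: nat
  assumes simple: "simple_graph V E" and no_isolated: "no_isolated_edges E"
    and pos_inj: "inj_on pos V"
    and earlier_degree: "v \<in> V \<Longrightarrow> card {u \<in> V. {u, v} \<in> E \<and> pos u < pos v} \<le> D"
begin

definition nbrs :: "'v \<Rightarrow> 'v set" where
  "nbrs v = {u. {u, v} \<in> E}"

definition earlier :: "'v \<Rightarrow> 'v set" where
  "earlier v = {u \<in> nbrs v. pos u < pos v}"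

definition later :: "'v \<Rightarrow> 'v set" where
  "later v = {u \<in> nbrs v. pos v < pos u}"

definition settled :: "nat \<Rightarrow> 'v \<Rightarrow> bool" where
  "settled i u \<longleftrightarrow> pos u < i \<or> (\<forall>t\<in>nbrs u. pos t < i)"

text \<open>When \<open>v\<close> of a tight pair is processed, the label of \<open>vs\<close> is the only label still open at
  \<open>v\<close> and at \<open>s\<close>, so it cannot separate their sums: the remaining sums must already differ,
  which is arranged when the last vertex of the support is processed.\<close>

definition tight_pair :: "'v \<Rightarrow> 'v \<Rightarrow> bool" where
  "tight_pair v s \<longleftrightarrow> later v = {s} \<and> later s = {} \<and> (\<forall>u\<in>earlier s. pos u \<le> pos v)"

definition pair_support :: "'v \<Rightarrow> 'v \<Rightarrow> 'v set" where
  "pair_support v s = earlier v \<union> (earlier s - {v})"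

definition closing_sinks :: "'v \<Rightarrow> 'v set" where
  "closing_sinks w = {s \<in> later w. later s = {} \<and> (\<forall>u\<in>earlier s. pos u \<le> pos w)}"

lemma edgeD: "{u, v} \<in> E \<Longrightarrow> u \<noteq> v \<and> u \<in> V \<and> v \<in> V"
  using simple_graph_edgeD[OF simple] by blast

lemma finite_V: "finite V"
  using simple unfolding simple_graph_def by blast

lemma pos_eq_iff: "u \<in> V \<Longrightarrow> v \<in> V \<Longrightarrow> pos u = pos v \<longleftrightarrow> u = v"
  using pos_inj unfolding inj_on_def by blast

lemma nbrs_subset: "nbrs v \<subseteq> V"
  unfolding nbrs_def using edgeD by blast

lemma finite_nbrs: "finite (nbrs v)"
  using nbrs_subset finite_V finite_subset by blast

lemma finite_earlier: "finite (earlier v)" and finite_later: "finite (later v)"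
  unfolding earlier_def later_def using finite_nbrs by simp_all

lemma mem_nbrs_commute: "u \<in> nbrs v \<longleftrightarrow> v \<in> nbrs u"
  unfolding nbrs_def by (simp add: insert_commute)

lemma mem_earlier_iff_mem_later: "u \<in> earlier v \<longleftrightarrow> v \<in> later u"
  unfolding earlier_def later_def using mem_nbrs_commute by blast

lemma nbrs_eq_earlier_Un_later: "nbrs v = earlier v \<union> later v"
proof -
  have "pos u \<noteq> pos v" if "u \<in> nbrs v" for u
    using that edgeD pos_eq_iff unfolding nbrs_def by blast
  thus ?thesis unfolding earlier_def later_def by (auto simp: nat_neq_iff)
qed

lemma earlier_later_disjoint: "earlier v \<inter> later v = {}"
  unfolding earlier_def later_def by auto

lemma card_earlier: "v \<in> V \<Longrightarrow> card (earlier v) \<le> D"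
proof -
  have "earlier v = {u \<in> V. {u, v} \<in> E \<and> pos u < pos v}"
    using nbrs_subset unfolding earlier_def nbrs_def by auto
  thus "v \<in> V \<Longrightarrow> ?thesis" using earlier_degree by simp
qed

lemma pair_support_nonempty:
  assumes "tight_pair v s"
  shows "pair_support v s \<noteq> {}"
proof
  assume empty: "pair_support v s = {}"
  have fv: "later v = {s}" and fs: "later s = {}" using assms unfolding tight_pair_def by auto
  have e: "{s, v} \<in> E" using fv unfolding later_def nbrs_def by blast
  have "nbrs v = {s}" "nbrs s \<subseteq> {v}"
    using nbrs_eq_earlier_Un_later empty fv fs unfolding pair_support_def by auto
  moreover obtain e' z where e': "e' \<in> E" "e' \<noteq> {s, v}" "z \<in> {s, v}" "z \<in> e'"
    using no_isolated e unfolding no_isolated_edges_def by blast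
  moreover obtain t where t: "e' = {z, t}"
    using simple_graph_edgeE[OF simple e'(1,4)] by blast
  moreover have "t \<in> nbrs z" using e'(1) t unfolding nbrs_def by (simp add: insert_commute)
  ultimately show False by (cases "z = s") (auto simp: insert_commute)
qed

lemma newly_settled:
  assumes w: "w \<in> V" "pos w = i" and u: "u \<in> V" "settled (Suc i) u" "\<not> settled i u" "u \<noteq> w"
  shows "u \<in> closing_sinks w"
proof -
  have "pos u \<noteq> i" using w u(1,4) pos_eq_iff by metis
  hence pu: "i < pos u" and le: "\<forall>t\<in>nbrs u. pos t \<le> i" using u(2,3) unfolding settled_def by auto
  obtain t where t: "t \<in> nbrs u" "\<not> pos t < i" using u(3) unfolding settled_def by blast
  hence "t = w" using le w nbrs_subset pos_eq_iff by (metis le_antisym not_le subsetD)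
  hence "u \<in> later w" using t pu w(2) mem_nbrs_commute unfolding later_def by blast
  moreover have "later u = {}" using le pu unfolding later_def by fastforce
  moreover have "\<forall>t\<in>earlier u. pos t \<le> pos w" using le w(2) unfolding earlier_def by simp
  ultimately show ?thesis unfolding closing_sinks_def by blast
qed

lemma tight_pairD:
  assumes "tight_pair v s"
  shows "s \<in> later v" "v \<in> earlier s" "v \<noteq> s" "v \<in> V"
proof -
  show s: "s \<in> later v" using assms unfolding tight_pair_def by auto
  thus "v \<in> earlier s" using mem_earlier_iff_mem_later by blast
  have "{s, v} \<in> E" using s unfolding later_def nbrs_def by blast
  thus "v \<noteq> s" "v \<in> V" using edgeD by auto
qed

lemma tight_pairs_disjoint:
  assumes vs: "tight_pair v s" and vs': "tight_pair v' s'" and "y \<in> {v, s}" "y \<in> {v', s'}"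
  shows "v = v' \<and> s = s'"
proof -
  have "pos v = pos v'" if "s = s'"
    using that tight_pairD(2)[OF vs] tight_pairD(2)[OF vs'] vs vs' unfolding tight_pair_def
    by (metis le_antisym)
  thus ?thesis using assms tight_pairD(4)[OF vs] tight_pairD(4)[OF vs'] pos_eq_iff
    unfolding tight_pair_def by auto
qed

lemma pair_support_not_ends:
  assumes "tight_pair v s" "r \<in> pair_support v s"
  shows "r \<noteq> v" "r \<noteq> s"
  using assms tight_pairD(1)[OF assms(1)] unfolding pair_support_def earlier_def later_def by auto

lemma tight_pair_not_closing:
  assumes vs: "tight_pair v s" and w: "w \<in> pair_support v s"
  shows "v \<notin> closing_sinks w" "s \<notin> closing_sinks w"
proof -
  show "v \<notin> closing_sinks w" using vs unfolding tight_pair_def closing_sinks_def by auto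
  show "s \<notin> closing_sinks w"
  proof
    assume "s \<in> closing_sinks w"
    hence "pos v \<le> pos w" using tight_pairD(2)[OF vs] unfolding closing_sinks_def by blast
    moreover have "w \<in> V" using w nbrs_subset unfolding pair_support_def earlier_def by blast
    moreover have "pos w < pos v \<or> pos w \<le> pos v \<and> w \<noteq> v"
      using w vs unfolding pair_support_def earlier_def tight_pair_def by auto
    ultimately show False using tight_pairD(4)[OF vs] pos_eq_iff by (metis le_antisym not_le)
  qed
qed

lemma earlier_pos_less_no_later:
  assumes no_later: "\<And>w. w \<in> V \<Longrightarrow> pos w = i \<Longrightarrow> later w = {}"
    and "t \<in> earlier u" "pos u < Suc i"
  shows "pos t < i"
proof -
  have "pos t < pos u" "later t \<noteq> {}" "t \<in> V"
    using assms(2) mem_earlier_iff_mem_later nbrs_subset unfolding earlier_def by auto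
  moreover have "pos t \<noteq> i" using no_later calculation(2,3) by blast
  ultimately show ?thesis using assms(3) by linarith
qed

lemma settled_Suc_no_later:
  assumes no_later: "\<And>w. w \<in> V \<Longrightarrow> pos w = i \<Longrightarrow> later w = {}"
    and u: "u \<in> V" "settled (Suc i) u"
  shows "settled i u"
proof (cases "pos u < Suc i")
  case True
  show ?thesis
  proof (cases "later u = {}")
    case True
    thus ?thesis using earlier_pos_less_no_later[OF no_later] \<open>pos u < Suc i\<close> nbrs_eq_earlier_Un_later
      unfolding settled_def by blast
  next
    case False
    hence "pos u \<noteq> i" using no_later u(1) by blast
    thus ?thesis using \<open>pos u < Suc i\<close> unfolding settled_def by simp
  qed
next
  case False
  have "pos t < i" if t: "t \<in> nbrs u" for t
  proof -
    have "pos t < Suc i" using t u(2) False unfolding settled_def by blast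
    moreover have "t \<in> earlier u" using t calculation False unfolding earlier_def by simp
    hence "later t \<noteq> {}" using mem_earlier_iff_mem_later by blast
    moreover have "t \<in> V" using t nbrs_subset by blast
    ultimately have "pos t \<noteq> i" using no_later by blast
    thus ?thesis using \<open>pos t < Suc i\<close> by simp
  qed
  thus ?thesis unfolding settled_def by blast
qed

end

locale greedy = odd_order_group G + ordered_graph V E pos D
  for G (structure) and V :: "'v set" and E pos D +
  assumes order_large: "2 * D + 3 \<le> order G" and D_pos: "1 \<le> D"
begin

definition vsum :: "('v set \<Rightarrow> 'a) \<Rightarrow> 'v \<Rightarrow> 'a" where
  "vsum f v = finprod G (\<lambda>u. f {u, v}) (nbrs v)"

definition earlier_sum :: "('v set \<Rightarrow> 'a) \<Rightarrow> 'v \<Rightarrow> 'a" where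
  "earlier_sum f v = finprod G (\<lambda>u. f {u, v}) (earlier v)"

definition pair_sum :: "('v set \<Rightarrow> 'a) \<Rightarrow> 'v \<Rightarrow> 'v \<Rightarrow> 'a" where
  "pair_sum f v s = finprod G (\<lambda>u. f {u, s}) (earlier s - {v})"

text \<open>The state after the vertices at positions \<open>< i\<close> have labelled the edges to their later
  neighbours; the sum at a settled vertex does not change any more.\<close>

definition partial_labelling :: "nat \<Rightarrow> ('v set \<Rightarrow> 'a) \<Rightarrow> bool" where
  "partial_labelling i f \<longleftrightarrow> (\<forall>e. f e \<in> carrier G) \<and>
     (\<forall>u v. {u, v} \<in> E \<longrightarrow> pos u < i \<longrightarrow> f {u, v} \<noteq> \<one>) \<and>
     (\<forall>u v. {u, v} \<in> E \<longrightarrow> settled i u \<longrightarrow> settled i v \<longrightarrow> vsum f u \<noteq> vsum f v) \<and>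
     (\<forall>v s. tight_pair v s \<longrightarrow> (\<forall>r\<in>pair_support v s. pos r < i) \<longrightarrow>
        earlier_sum f v \<noteq> pair_sum f v s)"

lemma partial_labelling_0: "partial_labelling 0 (\<lambda>_. \<one>)"
proof -
  have "\<not> settled 0 u" if "{u, v} \<in> E" for u v
    using that unfolding settled_def nbrs_def by (auto simp: insert_commute)
  thus ?thesis using pair_support_nonempty unfolding partial_labelling_def by blast
qed

lemma partial_labelling_Suc_no_later:
  assumes f: "partial_labelling i f" and no_later: "\<And>w. w \<in> V \<Longrightarrow> pos w = i \<Longrightarrow> later w = {}"
  shows "partial_labelling (Suc i) f"
  unfolding partial_labelling_def
proof (intro conjI allI impI ballI)
  fix e show "f e \<in> carrier G" using f unfolding partial_labelling_def by blast
next
  fix u v assume e: "{u, v} \<in> E" and u: "pos u < Suc i"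
  show "f {u, v} \<noteq> \<one>"
  proof (cases "pos u < i")
    case True thus ?thesis using f e unfolding partial_labelling_def by blast
  next
    case False
    hence "later u = {}" using no_later edgeD[OF e] u by simp
    hence "v \<in> earlier u" using e nbrs_eq_earlier_Un_later unfolding nbrs_def by (auto simp: insert_commute)
    hence "pos v < i" using earlier_pos_less_no_later[OF no_later] u by blast
    thus ?thesis using f e unfolding partial_labelling_def by (metis insert_commute)
  qed
next
  fix u v assume "{u, v} \<in> E" "settled (Suc i) u" "settled (Suc i) v"
  thus "vsum f u \<noteq> vsum f v"
    using f settled_Suc_no_later[OF no_later] edgeD unfolding partial_labelling_def by blast
next
  fix v s assume vs: "tight_pair v s" and support: "\<forall>r\<in>pair_support v s. pos r < Suc i"
  have "pos r < i" if r: "r \<in> pair_support v s" for r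
  proof -
    have "r \<in> earlier v \<or> r \<in> earlier s" using r unfolding pair_support_def by blast
    hence "later r \<noteq> {}" "r \<in> V"
      using mem_earlier_iff_mem_later nbrs_subset unfolding earlier_def by blast+
    hence "pos r \<noteq> i" using no_later by blast
    thus ?thesis using r support less_Suc_eq by blast
  qed
  thus "earlier_sum f v \<noteq> pair_sum f v s" using f vs unfolding partial_labelling_def by blast
qed

end

locale greedy_step = greedy +
  fixes i :: nat and f and w
  assumes partial: "partial_labelling i f" and w: "w \<in> V" "pos w = i" and later_w: "later w \<noteq> {}"
begin

definition rest where
  "rest y = finprod G (\<lambda>u. f {u, y}) (earlier y - {w})"

definition pair_rest where
  "pair_rest v s = finprod G (\<lambda>u. f {u, s}) (earlier s - {v, w})"

definition final_sums where
  "final_sums y = vsum f ` (earlier y - {w})"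

definition pairs where
  "pairs = {(v, s). tight_pair v s \<and> w \<in> pair_support v s \<and> (\<forall>r\<in>pair_support v s. pos r \<le> pos w)}"

lemma f_closed: "f e \<in> carrier G"
  using partial unfolding partial_labelling_def by blast

lemma closing_data:
  assumes "y \<in> closing_sinks w"
  shows "rest y \<in> carrier G \<and> finite (final_sums y) \<and> card (final_sums y) \<le> D - 1"
proof -
  have "w \<in> earlier y" using assms mem_earlier_iff_mem_later unfolding closing_sinks_def by blast
  moreover have "y \<in> V" using assms nbrs_subset unfolding closing_sinks_def later_def by blast
  ultimately have "card (earlier y - {w}) \<le> D - 1"
    using card_earlier[of y] finite_earlier[of y] by (simp add: diff_le_mono)
  hence "card (final_sums y) \<le> D - 1"
    unfolding final_sums_def using card_image_le[of "earlier y - {w}"] finite_earlier le_trans by blast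
  thus ?thesis unfolding rest_def final_sums_def using f_closed finite_earlier by simp
qed

lemma pairs_data:
  assumes "(v, s) \<in> pairs"
  shows "v \<noteq> s \<and> (v \<in> later w \<or> s \<in> later w) \<and> v \<notin> closing_sinks w \<and> s \<notin> closing_sinks w
    \<and> rest v \<in> carrier G \<and> pair_rest v s \<in> carrier G"
proof -
  have vs: "tight_pair v s" and ws: "w \<in> pair_support v s" using assms unfolding pairs_def by auto
  have "w \<in> earlier v \<or> w \<in> earlier s" using ws unfolding pair_support_def by blast
  hence "v \<in> later w \<or> s \<in> later w" using mem_earlier_iff_mem_later by blast
  moreover have "rest v \<in> carrier G" "pair_rest v s \<in> carrier G"
    unfolding rest_def pair_rest_def using f_closed by (auto intro: finprod_closed)
  ultimately show ?thesis using tight_pairD(3)[OF vs] tight_pair_not_closing[OF vs ws] by blast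
qed

lemma pairs_disjoint:
  "(v, s) \<in> pairs \<Longrightarrow> (v', s') \<in> pairs \<Longrightarrow> y \<in> {v, s} \<Longrightarrow> y \<in> {v', s'} \<Longrightarrow> v = v' \<and> s = s'"
  using tight_pairs_disjoint unfolding pairs_def by blast

lemma singleton_closing:
  assumes y: "later w = {y}" "y \<in> closing_sinks w"
  shows "rest y \<noteq> earlier_sum f w"
proof -
  have wy: "tight_pair w y" using y unfolding tight_pair_def closing_sinks_def by auto
  have "pos r < i" if r: "r \<in> pair_support w y" for r
  proof -
    have "pos r \<le> pos w" using r y(2) w(2) unfolding pair_support_def closing_sinks_def earlier_def by auto
    moreover have "r \<noteq> w" using pair_support_not_ends(1)[OF wy r] .
    moreover have "r \<in> V" using r nbrs_subset unfolding pair_support_def earlier_def by blast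
    ultimately show ?thesis using w pos_eq_iff by (metis le_neq_implies_less)
  qed
  hence "earlier_sum f w \<noteq> pair_sum f w y" using partial wy unfolding partial_labelling_def by blast
  thus ?thesis unfolding rest_def pair_sum_def by simp
qed

sublocale choice: forward_choice G D "later w" "earlier_sum f w" "vsum f ` earlier w" "closing_sinks w"
  rest final_sums pairs pair_rest
proof unfold_locales
  show "2 * D + 3 \<le> order G" by (rule order_large)
  show "1 \<le> D" by (rule D_pos)
  show "finite (later w)" by (rule finite_later)
  show "later w \<noteq> {}" by (rule later_w)
  show "earlier_sum f w \<in> carrier G" unfolding earlier_sum_def using f_closed by simp
  show "finite (vsum f ` earlier w)" using finite_earlier by simp
  show "card (vsum f ` earlier w) \<le> D" using card_image_le[OF finite_earlier] card_earlier[OF w(1)] le_trans by blast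
  show "closing_sinks w \<subseteq> later w" unfolding closing_sinks_def by blast
qed (use closing_data pairs_data pairs_disjoint singleton_closing in blast)+

lemma later_not_settled: "y \<in> later w \<Longrightarrow> \<not> settled i y"
  using w mem_nbrs_commute unfolding settled_def later_def by fastforce

lemma w_not_settled: "\<not> settled i w"
  using later_w w unfolding settled_def later_def by fastforce

end

locale greedy_update = greedy_step +
  fixes x
  assumes solution: "choice.solution x"
begin

definition f' where
  "f' e = (if \<exists>y\<in>later w. e = {w, y} then x (the_elem (e - {w})) else f e)"

lemma x_closed: "y \<in> later w \<Longrightarrow> x y \<in> carrier G \<and> x y \<noteq> \<one>"
  using solution unfolding choice.solution_def by blast

lemma total_not_used: "choice.total x \<notin> vsum f ` earlier w"
  using solution unfolding choice.solution_def by blast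

lemma closing_sum_new:
  "y \<in> closing_sinks w \<Longrightarrow> rest y \<otimes> x y \<noteq> choice.total x \<and> rest y \<otimes> x y \<notin> final_sums y"
  using solution unfolding choice.solution_def by blast

lemma pairs_separated:
  "(v, s) \<in> pairs \<Longrightarrow>
    (if v \<in> later w then x v else \<one>) \<otimes> rest v \<noteq> (if s \<in> later w then x s else \<one>) \<otimes> pair_rest v s"
  using solution unfolding choice.solution_def by blast

lemma f'_later: assumes "y \<in> later w" shows "f' {w, y} = x y" "f' {y, w} = x y"
proof -
  have "y \<noteq> w" using assms unfolding later_def by blast
  hence "{w, y} - {w} = {y}" by blast
  thus "f' {w, y} = x y" using assms unfolding f'_def by auto
  thus "f' {y, w} = x y" by (simp add: insert_commute)
qed

lemma f'_unchanged: "w \<notin> e \<Longrightarrow> f' e = f e"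
  unfolding f'_def by auto

lemma f'_unchanged_at_w: "u \<notin> later w \<Longrightarrow> f' {u, w} = f {u, w}"
  unfolding f'_def using later_def by (auto simp: doubleton_eq_iff)

lemma f'_closed: "f' e \<in> carrier G"
proof (cases "\<exists>y\<in>later w. e = {w, y}")
  case True thus ?thesis using f'_later x_closed by auto
next
  case False thus ?thesis unfolding f'_def using f_closed by simp
qed

lemma f'_earlier:
  assumes "u \<in> earlier v" "u \<noteq> w"
  shows "f' {u, v} = f {u, v}"
proof (cases "v = w")
  case True
  hence "u \<notin> later w" using assms(1) earlier_later_disjoint by blast
  thus ?thesis using True f'_unchanged_at_w by simp
next
  case False thus ?thesis using assms(2) f'_unchanged by simp
qed

lemma finprod_f'_earlier:
  assumes "v \<noteq> w" "A \<subseteq> earlier v"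
  shows "finprod G (\<lambda>u. f' {u, v}) A = (if w \<in> A then x v else \<one>) \<otimes> finprod G (\<lambda>u. f {u, v}) (A - {w})"
proof -
  have fin: "finite (A - {w})" using assms(2) finite_earlier finite_subset by blast
  have others: "finprod G (\<lambda>u. f' {u, v}) (A - {w}) = finprod G (\<lambda>u. f {u, v}) (A - {w})"
    using f'_earlier assms(2) f_closed by (intro finprod_cong') auto
  show ?thesis
  proof (cases "w \<in> A")
    case True
    hence "v \<in> later w" using assms(2) mem_earlier_iff_mem_later by blast
    have "finprod G (\<lambda>u. f' {u, v}) (insert w (A - {w}))
        = f' {w, v} \<otimes> finprod G (\<lambda>u. f' {u, v}) (A - {w})"
      using fin f'_closed by (intro finprod_insert) auto
    thus ?thesis using True others f'_later(1)[OF \<open>v \<in> later w\<close>] by (simp add: insert_absorb)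
  next
    case False thus ?thesis using others f_closed by simp
  qed
qed

lemma vsum_f'_settled:
  assumes "settled i u"
  shows "vsum f' u = vsum f u"
  unfolding vsum_def
proof (rule finprod_cong')
  have "u \<noteq> w" "u \<notin> later w" using assms w_not_settled later_not_settled by blast+
  thus "f' {t, u} = f {t, u}" if "t \<in> nbrs u" for t
    using f'_unchanged f'_unchanged_at_w by (cases "t = w") (auto simp: insert_commute)
qed (use f_closed in auto)

lemma vsum_f'_w: "vsum f' w = choice.total x"
proof -
  have "vsum f' w = finprod G (\<lambda>u. f' {u, w}) (earlier w) \<otimes> finprod G (\<lambda>u. f' {u, w}) (later w)"
    unfolding vsum_def nbrs_eq_earlier_Un_later
    using finite_earlier finite_later earlier_later_disjoint f'_closed by (intro finprod_Un_disjoint) auto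
  also have "finprod G (\<lambda>u. f' {u, w}) (earlier w) = earlier_sum f w"
    unfolding earlier_sum_def using f'_unchanged_at_w earlier_later_disjoint f_closed
    by (intro finprod_cong') auto
  also have "finprod G (\<lambda>u. f' {u, w}) (later w) = finprod G x (later w)"
    using f'_later(2) x_closed by (intro finprod_cong') auto
  finally show ?thesis unfolding choice.total_def .
qed

lemma vsum_f'_closing:
  assumes "s \<in> closing_sinks w"
  shows "vsum f' s = rest s \<otimes> x s"
proof -
  have sl: "s \<in> later w" and "later s = {}" using assms unfolding closing_sinks_def by auto
  have "s \<noteq> w" using sl unfolding later_def by blast
  moreover have "w \<in> earlier s" using sl mem_earlier_iff_mem_later by blast
  moreover have "nbrs s = earlier s" using \<open>later s = {}\<close> nbrs_eq_earlier_Un_later[of s] by simp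
  ultimately have "vsum f' s = x s \<otimes> rest s"
    unfolding vsum_def rest_def using finprod_f'_earlier[of s "earlier s"] by simp
  thus ?thesis using x_closed[OF sl] f_closed unfolding rest_def by (simp add: m_comm)
qed

lemma earlier_sum_f':
  "v \<noteq> w \<Longrightarrow> earlier_sum f' v = (if v \<in> later w then x v else \<one>) \<otimes> rest v"
  unfolding earlier_sum_def rest_def using finprod_f'_earlier[of v "earlier v"] mem_earlier_iff_mem_later
  by simp

lemma pair_sum_f':
  assumes "v \<noteq> w" "s \<noteq> w"
  shows "pair_sum f' v s = (if s \<in> later w then x s else \<one>) \<otimes> pair_rest v s"
proof -
  have "earlier s - {v} - {w} = earlier s - {v, w}" by blast
  thus ?thesis unfolding pair_sum_def pair_rest_def
    using finprod_f'_earlier[of s "earlier s - {v}"] assms mem_earlier_iff_mem_later by auto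
qed

lemma earlier_sum_f'_unchanged: "w \<notin> earlier v \<Longrightarrow> earlier_sum f' v = earlier_sum f v"
  unfolding earlier_sum_def using f'_earlier f_closed by (intro finprod_cong') auto

lemma pair_sum_f'_unchanged: "w \<notin> earlier s - {v} \<Longrightarrow> pair_sum f' v s = pair_sum f v s"
  unfolding pair_sum_def using f'_earlier f_closed by (intro finprod_cong') auto

lemma f'_nonzero:
  assumes e: "{u, v} \<in> E" and u: "pos u < Suc i"
  shows "f' {u, v} \<noteq> \<one>"
proof (cases "u = w")
  case True
  show ?thesis
  proof (cases "v \<in> later w")
    case True thus ?thesis using f'_later x_closed \<open>u = w\<close> by simp
  next
    case False
    have "v \<in> nbrs w" using e \<open>u = w\<close> unfolding nbrs_def by (simp add: insert_commute)
    hence "v \<in> earlier w" using False nbrs_eq_earlier_Un_later by blast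
    hence "pos v < i" using w(2) unfolding earlier_def by simp
    moreover have "f' {v, w} = f {v, w}" using False f'_unchanged_at_w by blast
    ultimately show ?thesis using partial e True unfolding partial_labelling_def by (metis insert_commute)
  qed
next
  case False
  hence "pos u < i" using u w edgeD[OF e] pos_eq_iff by (metis less_Suc_eq)
  hence "u \<notin> later w" using w(2) unfolding later_def by auto
  hence "f' {u, v} = f {u, v}" using False f'_unchanged f'_unchanged_at_w by (cases "v = w") auto
  thus ?thesis using partial e \<open>pos u < i\<close> unfolding partial_labelling_def by auto
qed

lemma vsum_f'_newly_settled:
  assumes e: "{u, v} \<in> E" and u: "settled (Suc i) u" "\<not> settled i u" and v: "settled (Suc i) v"
  shows "vsum f' u \<noteq> vsum f' v"
proof -
  have V: "u \<in> V" "v \<in> V" "u \<noteq> v" using edgeD[OF e] by auto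
  have vu: "v \<in> nbrs u" using e unfolding nbrs_def by (simp add: insert_commute)
  show ?thesis
  proof (cases "u = w")
    case True
    show ?thesis
    proof (cases "settled i v")
      case True
      hence "v \<in> earlier w" using vu \<open>u = w\<close> later_not_settled nbrs_eq_earlier_Un_later by blast
      thus ?thesis using vsum_f'_settled[OF True] vsum_f'_w total_not_used \<open>u = w\<close> by force
    next
      case False
      hence "v \<in> closing_sinks w" using newly_settled[OF w V(2) v False] V(3) \<open>u = w\<close> by blast
      thus ?thesis using vsum_f'_closing vsum_f'_w closing_sum_new \<open>u = w\<close> by metis
    qed
  next
    case False
    hence u_closing: "u \<in> closing_sinks w" using newly_settled[OF w V(1) u] by blast
    hence "later u = {}" unfolding closing_sinks_def by blast
    hence v_earlier: "v \<in> earlier u" using vu nbrs_eq_earlier_Un_later by blast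
    show ?thesis
    proof (cases "v = w")
      case True thus ?thesis using vsum_f'_closing[OF u_closing] vsum_f'_w closing_sum_new[OF u_closing] by simp
    next
      case False
      have "settled i v"
      proof (rule ccontr)
        assume "\<not> settled i v"
        hence "later v = {}" using newly_settled[OF w V(2) v] False unfolding closing_sinks_def by blast
        thus False using v_earlier mem_earlier_iff_mem_later by blast
      qed
      hence "vsum f' v \<in> final_sums u" using vsum_f'_settled v_earlier False unfolding final_sums_def by blast
      thus ?thesis using vsum_f'_closing[OF u_closing] closing_sum_new[OF u_closing] by metis
    qed
  qed
qed

lemma tight_pair_f':
  assumes vs: "tight_pair v s" and support: "\<forall>r\<in>pair_support v s. pos r < Suc i"
  shows "earlier_sum f' v \<noteq> pair_sum f' v s"
proof (cases "w \<in> pair_support v s")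
  case True
  hence "(v, s) \<in> pairs" using vs support w(2) unfolding pairs_def by (auto simp: less_Suc_eq_le)
  moreover have "v \<noteq> w" "s \<noteq> w" using pair_support_not_ends[OF vs True] by auto
  ultimately show ?thesis using pairs_separated earlier_sum_f' pair_sum_f' by simp
next
  case False
  have "pos r < i" if r: "r \<in> pair_support v s" for r
  proof -
    have "r \<in> V" using r nbrs_subset unfolding pair_support_def earlier_def by blast
    hence "pos r \<noteq> i" using r False w pos_eq_iff by metis
    thus ?thesis using r support less_Suc_eq by blast
  qed
  hence "earlier_sum f v \<noteq> pair_sum f v s" using partial vs unfolding partial_labelling_def by blast
  moreover have "w \<notin> earlier v" "w \<notin> earlier s - {v}" using False unfolding pair_support_def by auto
  ultimately show ?thesis using earlier_sum_f'_unchanged pair_sum_f'_unchanged by simp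
qed

lemma partial_labelling_f': "partial_labelling (Suc i) f'"
  unfolding partial_labelling_def
proof (intro conjI allI impI)
  fix u v assume e: "{u, v} \<in> E" and settled: "settled (Suc i) u" "settled (Suc i) v"
  show "vsum f' u \<noteq> vsum f' v"
  proof (cases "settled i u \<and> settled i v")
    case True
    thus ?thesis using partial e vsum_f'_settled unfolding partial_labelling_def by auto
  next
    case False
    thus ?thesis using vsum_f'_newly_settled[OF e] vsum_f'_newly_settled[of v u] e settled
      by (metis insert_commute)
  qed
qed (use f'_closed f'_nonzero tight_pair_f' in auto)

end

context greedy_step
begin

lemma partial_labelling_Suc: "\<exists>f'. partial_labelling (Suc i) f'"
proof -
  obtain x where "choice.solution x" using choice.solution_exists by blast
  then interpret greedy_update G V E pos D i f w x by unfold_locales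
  show ?thesis using partial_labelling_f' by blast
qed

end

context greedy
begin

lemma partial_labelling_exists: "\<exists>f. partial_labelling i f"
proof (induction i)
  case 0 thus ?case using partial_labelling_0 by blast
next
  case (Suc i)
  then obtain f where f: "partial_labelling i f" by blast
  show ?case
  proof (cases "\<exists>w\<in>V. pos w = i \<and> later w \<noteq> {}")
    case True
    then obtain w where w: "w \<in> V" "pos w = i" "later w \<noteq> {}" by blast
    interpret greedy_step G V E pos D i f w by unfold_locales (use f w in auto)
    show ?thesis by (rule partial_labelling_Suc)
  next
    case False thus ?thesis using partial_labelling_Suc_no_later[OF f] by blast
  qed
qed

lemma wsum_eq_vsum:
  assumes "\<And>e. f e \<in> carrier G"
  shows "wsum G E f v = vsum f v"
proof -
  have "{e \<in> E. v \<in> e} = (\<lambda>u. {u, v}) ` nbrs v"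
  proof
    show "{e \<in> E. v \<in> e} \<subseteq> (\<lambda>u. {u, v}) ` nbrs v"
    proof
      fix e assume e: "e \<in> {e \<in> E. v \<in> e}"
      then obtain t where "e = {v, t}" using simple_graph_edgeE[OF simple] by blast
      thus "e \<in> (\<lambda>u. {u, v}) ` nbrs v" using e unfolding nbrs_def by (auto simp: insert_commute)
    qed
  qed (auto simp: nbrs_def)
  moreover have "inj_on (\<lambda>u. {u, v}) (nbrs v)" by (auto simp: inj_on_def doubleton_eq_iff)
  ultimately show ?thesis
    unfolding wsum_def vsum_def using assms by (simp add: finprod_reindex)
qed

theorem group_sum_colourable: "group_sum_colourable G E"
proof -
  define N where "N = Suc (Max (pos ` V))"
  have N: "pos v < N" if "v \<in> V" for v
    unfolding N_def using that finite_V by (simp add: le_imp_less_Suc)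
  obtain f where f: "partial_labelling N f" using partial_labelling_exists by blast
  have closed: "f e \<in> carrier G" for e using f unfolding partial_labelling_def by blast
  show ?thesis unfolding group_sum_colourable_def
  proof (intro exI conjI allI impI ballI)
    fix e assume e: "e \<in> E"
    then obtain u v where uv: "e = {u, v}" using simple unfolding simple_graph_def by blast
    hence "pos u < N" using e N edgeD by blast
    hence "f e \<noteq> \<one>" using f e uv unfolding partial_labelling_def by blast
    thus "f e \<in> carrier G - {\<one>}" using closed by blast
  next
    fix u v assume e: "{u, v} \<in> E"
    have "settled N u" "settled N v" using N edgeD[OF e] unfolding settled_def by auto
    hence "vsum f u \<noteq> vsum f v" using f e unfolding partial_labelling_def by blast
    thus "wsum G E f u \<noteq> wsum G E f v" using wsum_eq_vsum[OF closed] by simp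
  qed
qed

end

theorem all_groups_of_order_work_if_ordered:
  assumes "ordered_graph V E pos D" "1 \<le> D" "odd n" "2 * D + 3 \<le> n"
  shows "all_groups_of_order_work E n"
  unfolding all_groups_of_order_work_def
proof (intro allI impI)
  fix Gr :: "nat monoid"
  assume "comm_group Gr" "finite (carrier Gr)" "card (carrier Gr) = n"
  hence "greedy Gr V E pos D"
    using assms unfolding greedy_def greedy_axioms_def odd_order_group_def odd_order_group_axioms_def order_def
    by simp
  thus "group_sum_colourable Gr E" by (rule greedy.group_sum_colourable)
qed

section \<open>The first primes larger than 3\<close>

definition primes_gt3_below :: "nat \<Rightarrow> nat set" where
  "primes_gt3_below p = {q. Factorial_Ring.prime q \<and> 3 < q \<and> q < p}"

lemma finite_primes_gt3_below: "finite (primes_gt3_below p)"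
  unfolding primes_gt3_below_def by (rule finite_subset[of _ "{..<p}"]) auto

lemma card_primes_gt3_below_less:
  assumes "Factorial_Ring.prime p" "3 < p" "p < p'"
  shows "card (primes_gt3_below p) < card (primes_gt3_below p')"
proof (rule psubset_card_mono[OF finite_primes_gt3_below])
  show "primes_gt3_below p \<subset> primes_gt3_below p'"
    using assms unfolding primes_gt3_below_def by auto
qed

lemma card_primes_gt3_below_attained: "\<exists>p. Factorial_Ring.prime p \<and> 3 < p \<and> card (primes_gt3_below p) = j"
proof (induction j)
  case 0
  define p where "p = (LEAST q. Factorial_Ring.prime q \<and> (3::nat) < q)"
  have p: "Factorial_Ring.prime p \<and> 3 < p" unfolding p_def by (rule LeastI_ex) (use bigger_prime in blast)
  have "primes_gt3_below p = {}"
    unfolding primes_gt3_below_def p_def using not_less_Least by blast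
  thus ?case using p by auto
next
  case (Suc j)
  then obtain p where p: "Factorial_Ring.prime p" "3 < p" "card (primes_gt3_below p) = j" by blast
  define p' where "p' = (LEAST q. Factorial_Ring.prime q \<and> p < q)"
  have p': "Factorial_Ring.prime p' \<and> p < p'" unfolding p'_def by (rule LeastI_ex) (use bigger_prime in blast)
  have "primes_gt3_below p' = insert p (primes_gt3_below p)"
    using p p' not_less_Least[of _ "\<lambda>q. Factorial_Ring.prime q \<and> p < q"] unfolding primes_gt3_below_def p'_def
    by (auto simp: not_less_iff_gr_or_eq)
  hence "card (primes_gt3_below p') = Suc j"
    using p finite_primes_gt3_below unfolding primes_gt3_below_def by simp
  thus ?case using p p' by auto
qed

lemma bij_betw_first_primes_gt3:
  "bij_betw (\<lambda>p. card (primes_gt3_below p)) (first_primes_gt3 a) {..<a}"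
proof -
  have first: "first_primes_gt3 a = {p. Factorial_Ring.prime p \<and> 3 < p \<and> card (primes_gt3_below p) < a}"
    unfolding first_primes_gt3_def primes_gt3_below_def by simp
  show ?thesis unfolding bij_betw_def
  proof
    show "inj_on (\<lambda>p. card (primes_gt3_below p)) (first_primes_gt3 a)"
    proof (rule inj_onI)
      fix p q assume "p \<in> first_primes_gt3 a" "q \<in> first_primes_gt3 a"
        and eq: "card (primes_gt3_below p) = card (primes_gt3_below q)"
      hence "Factorial_Ring.prime p" "3 < p" "Factorial_Ring.prime q" "3 < q" unfolding first by auto
      hence "\<not> p < q" "\<not> q < p" using card_primes_gt3_below_less eq by (metis less_irrefl)+
      thus "p = q" by simp
    qed
    show "(\<lambda>p. card (primes_gt3_below p)) ` first_primes_gt3 a = {..<a}"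
    proof
      show "(\<lambda>p. card (primes_gt3_below p)) ` first_primes_gt3 a \<subseteq> {..<a}" unfolding first by auto
      show "{..<a} \<subseteq> (\<lambda>p. card (primes_gt3_below p)) ` first_primes_gt3 a"
      proof
        fix j assume "j \<in> {..<a}"
        moreover obtain p where "Factorial_Ring.prime p" "3 < p" "card (primes_gt3_below p) = j"
          using card_primes_gt3_below_attained by blast
        ultimately show "j \<in> (\<lambda>p. card (primes_gt3_below p)) ` first_primes_gt3 a"
          unfolding first by (intro image_eqI[of _ _ p]) auto
      qed
    qed
  qed
qed

lemma prod_first_primes_gt3:
  "odd (\<Prod>(first_primes_gt3 a)) \<and> 4 * a + 1 \<le> \<Prod>(first_primes_gt3 a)"
proof -
  have finite: "finite (first_primes_gt3 a)" and card: "card (first_primes_gt3 a) = a"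
    using bij_betw_first_primes_gt3[of a] bij_betw_finite bij_betw_same_card by fastforce+
  have odd: "odd p" and ge5: "5 \<le> p" if "p \<in> first_primes_gt3 a" for p
  proof -
    have p: "Factorial_Ring.prime p" "3 < p" using that unfolding first_primes_gt3_def by auto
    thus "odd p" using prime_odd_nat by simp
    thus "5 \<le> p" using p(2) by presburger
  qed
  have "4 * a + 1 \<le> (5::nat) ^ a" by (induction a) auto
  also have "\<dots> = (\<Prod>p\<in>first_primes_gt3 a. 5)" using card by simp
  also have "\<dots> \<le> \<Prod>(first_primes_gt3 a)" using ge5 by (intro prod_mono) auto
  finally show ?thesis using finite odd by (simp add: even_prod_iff)
qed

theorem corollary7:
  fixes V :: "'v set" and E :: "'v set set" and a :: nat
  assumes "0 < a"
    and "simple_graph V E"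
    and "arboricity E \<le> a"
    and "no_isolated_edges E"
  shows "(\<exists>k. 0 < k \<and> all_groups_of_order_work E k) \<and>
         chi_sigma_g_star E \<le> \<Prod>(first_primes_gt3 a)"
proof -
  define n where "n = \<Prod>(first_primes_gt3 a)"
  have n: "odd n" "4 * a + 1 \<le> n" using prod_first_primes_gt3 unfolding n_def by auto
  obtain pos :: "'v \<Rightarrow> nat" where "inj_on pos V"
    "\<forall>v\<in>V. card {u \<in> V. {u, v} \<in> E \<and> pos u < pos v} \<le> 2 * a - 1"
    using degeneracy_ordering_if_arboricity_le assms(1-3) by blast
  hence "ordered_graph V E pos (2 * a - 1)" using assms(2,4) unfolding ordered_graph_def by blast
  moreover have "1 \<le> 2 * a - 1" "2 * (2 * a - 1) + 3 \<le> n" using n(2) assms(1) by linarith+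
  ultimately have works: "all_groups_of_order_work E n"
    using all_groups_of_order_work_if_ordered n(1) by blast
  have "0 < n" using n(1) by (rule odd_pos)
  hence "chi_sigma_g_star E \<le> n" unfolding chi_sigma_g_star_def using works by (intro Least_le) blast
  thus ?thesis using \<open>0 < n\<close> works unfolding n_def by blast
qed

end
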